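(* Let $f(x,y)=c_{12}(xy^2+x^2y)+c_{34}(x^2+y^2)+c_5xy+c_{67}(x+y)+c_8$ with $c_{12},c_{34},c_5,c_{67}\neq0$ and $c_8$ arbitrary (with $v_8=+\infty$ if $c_8=0$), and suppose $C(\operatorname{trop}(f))$ is a truncated honeycomb, i.e. $\mathcal{S}_v$ contains the six triangles $[P_1,P_2,P_5],[P_1,P_4,P_5],[P_2,P_3,P_5],[P_4,P_5,P_7],[P_3,P_5,P_6],[P_5,P_6,P_7]$. Then $C(\operatorname{trop}(f))$ is quasi-symmetric (all six sides of the hexagonal cycle have the same lattice length) if and only if $$2v_{34}=v_{12}+v_{67}\quad\text{and}\quad -v_5+2v_{67}<v_8 .$$ In that case the lattice length of each side of the hexagon is $|v_{34}-v_5|$, and, when $c_8\ne0$, the lattice length of the tail (the bounded edge dual to the segment $P_6P_7$) is $|v_5-2v_{67}+v_8|$. Moreover $C(\operatorname{trop}(f))$ is symmetric (quasi-symmetric and the six edges emanating from the hexagon are all rays, i.e. there is no tail) if and only if $2v_{34}=v_{12}+v_{67}$ and $v_8=\infty$ (i.e. $c_8=0$).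
   Context: $\mathbb{K}$ is a field with valuation $\operatorname{val}$, $v_k=\operatorname{val}(c_k)$. The tropicalization is $\operatorname{trop}(f)(X,Y)=\min(v_{12}+X+2Y,\,v_{12}+2X+Y,\,v_{34}+2X,\,v_{34}+2Y,\,v_5+X+Y,\,v_{67}+X,\,v_{67}+Y,\,v_8)$ (terms with zero coefficient omitted), and $C(\operatorname{trop}(f))$ is its non-differentiability locus. Label $P_1=(1,2),P_2=(2,1),P_3=(2,0),P_4=(0,2),P_5=(1,1),P_6=(1,0),P_7=(0,1),P_8=(0,0)$ with heights $h(P_1)=h(P_2)=v_{12}$, $h(P_3)=h(P_4)=v_{34}$, $h(P_5)=v_5$, $h(P_6)=h(P_7)=v_{67}$, $h(P_8)=v_8$; the regular subdivision $\mathcal{S}_v$ of the Newton polygon is the set of projections to $\mathbb{R}^2$ of the two-dimensional lower faces of the convex hull of the lifted support points $(P_k,h(P_k))$; the curve is dual to $\mathcal{S}_v$ (vertices ↔ cells, bounded edges ↔ interior edges, rays ↔ boundary edges). The lattice length of a bounded edge from $p$ to $q$ is the real $\lambda\ge0$ with $q-p=\lambda w$, where $w$ is the primitive integer vector in the direction of the edge. *)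

theory Defs
  imports "HOL-Analysis.Analysis"
begin

definition is_valuation :: "('a::field \<Rightarrow> ereal) \<Rightarrow> bool" where
  "is_valuation val \<longleftrightarrow>
     (\<forall>x. val x = \<infinity> \<longleftrightarrow> x = 0) \<and> (\<forall>x. val x \<noteq> -\<infinity>) \<and>
     (\<forall>x y. val (x * y) = val x + val y) \<and>
     (\<forall>x y. min (val x) (val y) \<le> val (x + y))"

definition Pt :: "nat \<Rightarrow> real \<times> real" where
  "Pt k = [(1,2),(2,1),(2,0),(0,2),(1,1),(1,0),(0,1),(0,0)] ! (k - 1)"

text \<open>Coefficient of the monomial x^a y^b with (a,b) = P_k in
  f = c12 (x y^2 + x^2 y) + c34 (x^2 + y^2) + c5 x y + c67 (x + y) + c8.\<close>
definition coefs :: "'a \<Rightarrow> 'a \<Rightarrow> 'a \<Rightarrow> 'a \<Rightarrow> 'a \<Rightarrow> nat \<Rightarrow> 'a" where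
  "coefs c12 c34 c5 c67 c8 k = [c12, c12, c34, c34, c5, c67, c67, c8] ! (k - 1)"

definition supp :: "(nat \<Rightarrow> 'a::zero) \<Rightarrow> nat set" where
  "supp c = {k \<in> {1..8}. c k \<noteq> 0}"

text \<open>Height h(P_k) = val(c_k) (finite on the support).\<close>
definition hgt :: "('a \<Rightarrow> ereal) \<Rightarrow> (nat \<Rightarrow> 'a) \<Rightarrow> nat \<Rightarrow> real" where
  "hgt val c k = real_of_ereal (val (c k))"

definition trop_term :: "('a \<Rightarrow> ereal) \<Rightarrow> (nat \<Rightarrow> 'a) \<Rightarrow> nat \<Rightarrow> real \<times> real \<Rightarrow> real" where
  "trop_term val c k x = hgt val c k + fst (Pt k) * fst x + snd (Pt k) * snd x"

definition trop :: "('a \<Rightarrow> ereal) \<Rightarrow> (nat \<Rightarrow> 'a::zero) \<Rightarrow> real \<times> real \<Rightarrow> real" where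
  "trop val c x = Min ((\<lambda>k. trop_term val c k x) ` supp c)"

definition newton_polygon :: "(nat \<Rightarrow> 'a::zero) \<Rightarrow> (real \<times> real) set" where
  "newton_polygon c = convex hull (Pt ` supp c)"

definition lifted :: "('a \<Rightarrow> ereal) \<Rightarrow> (nat \<Rightarrow> 'a::zero) \<Rightarrow> ((real \<times> real) \<times> real) set" where
  "lifted val c = (\<lambda>k. (Pt k, hgt val c k)) ` supp c"

definition lower_face :: "('a \<Rightarrow> ereal) \<Rightarrow> (nat \<Rightarrow> 'a::zero) \<Rightarrow> ((real \<times> real) \<times> real) set \<Rightarrow> bool" where
  "lower_face val c F \<longleftrightarrow> F \<noteq> {} \<and>
     (\<exists>a b d. (\<forall>p \<in> convex hull (lifted val c).
                  a * fst (fst p) + b * snd (fst p) + d \<le> snd p) \<and>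
              F = {p \<in> convex hull (lifted val c).
                  snd p = a * fst (fst p) + b * snd (fst p) + d})"

definition cells :: "('a \<Rightarrow> ereal) \<Rightarrow> (nat \<Rightarrow> 'a::zero) \<Rightarrow> (real \<times> real) set set" where
  "cells val c = {fst ` F | F. lower_face val c F \<and> aff_dim F = 2}"

definition dual_vertex :: "('a \<Rightarrow> ereal) \<Rightarrow> (nat \<Rightarrow> 'a::zero) \<Rightarrow> (real \<times> real) set \<Rightarrow> real \<times> real" where
  "dual_vertex val c \<sigma> =
     (THE x. \<forall>k \<in> supp c. Pt k \<in> \<sigma> \<longrightarrow> trop_term val c k x = trop val c x)"

definition primitive_vec :: "int \<times> int \<Rightarrow> bool" where
  "primitive_vec w \<longleftrightarrow> w \<noteq> (0, 0) \<and> gcd (fst w) (snd w) = 1"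

definition lattice_length :: "real \<times> real \<Rightarrow> real \<times> real \<Rightarrow> real" where
  "lattice_length p q =
     (THE l. l \<ge> 0 \<and> (\<exists>w. primitive_vec w \<and>
         q - p = (l * of_int (fst w), l * of_int (snd w))))"

definition tri :: "nat \<Rightarrow> nat \<Rightarrow> nat \<Rightarrow> (real \<times> real) set" where
  "tri i j k = convex hull {Pt i, Pt j, Pt k}"

text \<open>The six triangles around P_5, in cyclic order; consecutive ones share the
  interior edge P_5P_2, P_5P_3, P_5P_6, P_5P_7, P_5P_4, P_5P_1 respectively.\<close>
definition hex_cells :: "(real \<times> real) set list" where
  "hex_cells = [tri 1 2 5, tri 2 3 5, tri 3 5 6, tri 5 6 7, tri 4 5 7, tri 1 4 5]"

definition truncated_honeycomb :: "('a \<Rightarrow> ereal) \<Rightarrow> (nat \<Rightarrow> 'a::zero) \<Rightarrow> bool" where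
  "truncated_honeycomb val c \<longleftrightarrow> set hex_cells \<subseteq> cells val c"

definition hex_side_lengths :: "('a \<Rightarrow> ereal) \<Rightarrow> (nat \<Rightarrow> 'a::zero) \<Rightarrow> real list" where
  "hex_side_lengths val c =
     map (\<lambda>i. lattice_length (dual_vertex val c (hex_cells ! i))
                              (dual_vertex val c (hex_cells ! ((i + 1) mod 6)))) [0..<6]"

definition quasi_symmetric :: "('a \<Rightarrow> ereal) \<Rightarrow> (nat \<Rightarrow> 'a::zero) \<Rightarrow> bool" where
  "quasi_symmetric val c \<longleftrightarrow> (\<forall>l \<in> set (hex_side_lengths val c). l = hex_side_lengths val c ! 0)"

text \<open>The remaining edges of the six triangles (dual to the six edges emanating from the
  hexagon): P_1P_2, P_2P_3, P_3P_6, P_6P_7, P_7P_4, P_4P_1. The dual edge is a ray iff the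
  segment is a boundary edge, i.e. lies in the boundary of the Newton polygon.\<close>
definition outer_edges :: "(real \<times> real) set list" where
  "outer_edges = [closed_segment (Pt 1) (Pt 2), closed_segment (Pt 2) (Pt 3),
                  closed_segment (Pt 3) (Pt 6), closed_segment (Pt 6) (Pt 7),
                  closed_segment (Pt 7) (Pt 4), closed_segment (Pt 4) (Pt 1)]"

definition symmetric_curve :: "('a \<Rightarrow> ereal) \<Rightarrow> (nat \<Rightarrow> 'a::zero) \<Rightarrow> bool" where
  "symmetric_curve val c \<longleftrightarrow> quasi_symmetric val c \<and>
     (\<forall>e \<in> set outer_edges. e \<subseteq> frontier (newton_polygon c))"

end

theory Submission
  imports Defs
begin

text \<open>
  Every cell of the regular subdivision is the projection of the lifted support points lying on a
  lower supporting plane \<open>z = g \<bullet> p + d\<close>, and the vertex of the tropical curve dual to it is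
  \<open>-g\<close>. For each of the six triangles around \<open>P\<^sub>5\<close> the plane is fixed by the three vertex heights,
  which gives the hexagon explicitly: four of its sides have lattice length \<open>\<bar>v\<^sub>3\<^sub>4 - v\<^sub>5\<bar>\<close> and
  two have length \<open>\<bar>v\<^sub>1\<^sub>2 + v\<^sub>6\<^sub>7 - v\<^sub>3\<^sub>4 - v\<^sub>5\<bar>\<close>. That these triangles are cells means that the
  next lattice point lies strictly above each plane, i.e. \<open>v\<^sub>5 < v\<^sub>3\<^sub>4\<close>,
  \<open>v\<^sub>3\<^sub>4 + v\<^sub>5 < v\<^sub>1\<^sub>2 + v\<^sub>6\<^sub>7\<close> and \<open>2 v\<^sub>6\<^sub>7 - v\<^sub>5 < v\<^sub>8\<close>. Hence all sides are equal iff
  \<open>2 v\<^sub>3\<^sub>4 = v\<^sub>1\<^sub>2 + v\<^sub>6\<^sub>7\<close>, the condition on \<open>v\<^sub>8\<close> being automatic.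

  If \<open>c\<^sub>8 \<noteq> 0\<close>, any cell sharing \<open>P\<^sub>6P\<^sub>7\<close> with \<open>P\<^sub>5P\<^sub>6P\<^sub>7\<close> has its plane above that of
  \<open>P\<^sub>5P\<^sub>6P\<^sub>7\<close> and must therefore be \<open>P\<^sub>6P\<^sub>7P\<^sub>8\<close>, whose dual vertex gives the tail. If \<open>c\<^sub>8 = 0\<close>,
  the six outer edges lie on supporting lines of the Newton polygon; otherwise the midpoint of
  \<open>P\<^sub>6P\<^sub>7\<close> is interior.
\<close>

section \<open>Convex geometry\<close>

lemma convex_hull_Int_supporting_hyperplane:
  fixes L :: "'a::euclidean_space set"
  assumes "finite L" and below: "\<forall>y\<in>L. n \<bullet> y \<le> m"
  shows "convex hull L \<inter> {p. n \<bullet> p = m} = convex hull {y\<in>L. n \<bullet> y = m}"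
proof
  have "convex hull L \<subseteq> {p. n \<bullet> p \<le> m}"
    using below by (intro hull_minimal convex_halfspace_le) auto
  then have "(convex hull L \<inter> {p. n \<bullet> p = m}) face_of convex hull L"
    by (intro face_of_Int_supporting_hyperplane_le) (auto simp: convex_convex_hull)
  then obtain S where S: "S \<subseteq> L" "convex hull L \<inter> {p. n \<bullet> p = m} = convex hull S"
    using face_of_convex_hull_subset finite_imp_compact[OF \<open>finite L\<close>] by metis
  have "S \<subseteq> {y\<in>L. n \<bullet> y = m}"
    using S hull_subset[of S convex] by auto
  then show "convex hull L \<inter> {p. n \<bullet> p = m} \<subseteq> convex hull {y\<in>L. n \<bullet> y = m}"
    unfolding S(2) by (rule hull_mono)
next
  have "convex hull {y\<in>L. n \<bullet> y = m} \<subseteq> {p. n \<bullet> p = m}"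
    by (intro hull_minimal convex_hyperplane) auto
  moreover have "convex hull {y\<in>L. n \<bullet> y = m} \<subseteq> convex hull L"
    by (intro hull_mono) auto
  ultimately show "convex hull {y\<in>L. n \<bullet> y = m} \<subseteq> convex hull L \<inter> {p. n \<bullet> p = m}"
    by blast
qed

lemma aff_dim_eq_2_if_not_collinear:
  fixes a b c :: "'a::euclidean_space"
  assumes "\<not> collinear {a, b, c}"
  shows "aff_dim {a, b, c} = 2"
proof -
  have "a \<noteq> b" "a \<noteq> c" "b \<noteq> c" "\<not> affine_dependent {a, b, c}"
    using assms collinear_3_eq_affine_dependent by blast+
  then show ?thesis
    using aff_dim_affine_independent[of "{a, b, c}"] by simp
qed

lemma affine_hull_eq_UNIV_if_not_collinear:
  fixes a b c :: "real \<times> real"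
  assumes "\<not> collinear {a, b, c}"
  shows "affine hull {a, b, c} = UNIV"
  using aff_dim_eq_2_if_not_collinear[OF assms] aff_dim_eq_full[of "{a, b, c}"] by simp

lemma eq_triple_if_aff_dim_image_eq_2:
  fixes f :: "'b \<Rightarrow> 'a::euclidean_space"
  assumes "C \<subseteq> {i, j, l}" and "aff_dim (f ` C) = 2"
  shows "C = {i, j, l}"
proof -
  have fin: "finite C"
    using assms(1) finite_subset by blast
  have "2 \<le> int (card (f ` C)) - 1"
    using assms(2) aff_dim_le_card[of "f ` C"] fin by simp
  also have "\<dots> \<le> int (card C) - 1"
    using card_image_le[OF fin, of f] by simp
  finally have "card {i, j, l} \<le> card C"
    by (auto simp: card_insert_if)
  then show ?thesis
    using assms(1) by (intro card_seteq) auto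
qed

lemma closed_segment_subset_frontier_convex_hull:
  fixes S :: "'a::euclidean_space set"
  assumes "a \<in> S" "b \<in> S" "n \<noteq> 0" "\<forall>p\<in>S. n \<bullet> p \<le> m" "n \<bullet> a = m" "n \<bullet> b = m"
  shows "closed_segment a b \<subseteq> frontier (convex hull S)"
proof
  fix x assume x: "x \<in> closed_segment a b"
  have "closed_segment a b \<subseteq> convex hull S"
    using assms(1,2) by (intro closed_segment_subset) (simp_all add: hull_inc convex_convex_hull)
  then have "x \<in> closure (convex hull S)"
    using x closure_subset by blast
  moreover have "closed_segment a b \<subseteq> {p. n \<bullet> p = m}"
    using assms(5,6) by (intro closed_segment_subset) (simp_all add: convex_hyperplane)
  moreover have "convex hull S \<subseteq> {p. n \<bullet> p \<le> m}"
    using assms(4) by (intro hull_minimal convex_halfspace_le) auto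
  then have "interior (convex hull S) \<subseteq> {p. n \<bullet> p < m}"
    using interior_mono interior_halfspace_le[OF assms(3)] by blast
  ultimately show "x \<in> frontier (convex hull S)"
    using x unfolding frontier_def by force
qed

lemma unit_square_center_mem_interior_convex_hull:
  fixes S :: "(real \<times> real) set"
  assumes "{(0, 0), (1, 0), (0, 1), (1, 1)} \<subseteq> S"
  shows "(1/2, 1/2) \<in> interior (convex hull S)"
proof -
  let ?T = "{p :: real \<times> real. 0 < fst p \<and> fst p < 1 \<and> 0 < snd p \<and> snd p < 1}"
  have "open ?T"
    by (simp add: Collect_conj_eq open_Int open_Collect_less continuous_on_fst continuous_on_snd
        continuous_on_const)
  moreover have "?T \<subseteq> convex hull S"
  proof
    fix p :: "real \<times> real" assume "p \<in> ?T"
    then obtain x y where p: "p = (x, y)" "0 \<le> x" "x \<le> 1" "0 \<le> y" "y \<le> 1"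
      by (cases p) auto
    have cvx: "convex (convex hull S)"
      by (rule convex_convex_hull)
    have corners: "(0, 0) \<in> convex hull S" "(1, 0) \<in> convex hull S"
        "(0, 1) \<in> convex hull S" "(1, 1) \<in> convex hull S"
      using assms by (auto intro: hull_inc)
    have bottom: "(x, 0) \<in> convex hull S"
      using convexD[OF cvx corners(1,2), of "1 - x" x] p by simp
    have top: "(x, 1) \<in> convex hull S"
      using convexD[OF cvx corners(3,4), of "1 - x" x] p by simp
    show "p \<in> convex hull S"
      using convexD[OF cvx bottom top, of "1 - y" y] p by (simp add: algebra_simps)
  qed
  moreover have "(1/2, 1/2) \<in> ?T"
    by simp
  ultimately show ?thesis
    using interior_maximal by blast
qed

section \<open>Lattice length\<close>

lemma primitive_vec_uminus: "primitive_vec (- a, - b) \<longleftrightarrow> primitive_vec (a, b)"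
  by (simp add: primitive_vec_def)

lemma primitive_vec_parallel:
  assumes "primitive_vec (a, b)" "primitive_vec (a', b')" "a * b' = b * a'"
  shows "\<bar>a\<bar> = \<bar>a'\<bar> \<and> \<bar>b\<bar> = \<bar>b'\<bar>"
proof -
  have "coprime a b" "coprime b a" "coprime a' b'" "coprime b' a'"
    using assms(1,2) by (simp_all add: primitive_vec_def coprime_iff_gcd_eq_1 gcd.commute)
  moreover have "a dvd b * a'" "b dvd a * b'"
    using assms(3) dvd_triv_left[of a b'] dvd_triv_left[of b a'] by simp_all
  moreover have "a' dvd b' * a" "b' dvd a' * b"
    using assms(3) dvd_triv_right[of a' b] dvd_triv_right[of b' a] by (simp_all add: mult.commute)
  ultimately have "a dvd a'" "a' dvd a" "b dvd b'" "b' dvd b"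
    using coprime_dvd_mult_right_iff by blast+
  then show ?thesis
    using zdvd_antisym_abs by blast
qed

lemma lattice_length_eq_abs:
  assumes w: "primitive_vec (a, b)" and pq: "q - p = (t * of_int a, t * of_int b)"
  shows "lattice_length p q = \<bar>t\<bar>"
  unfolding lattice_length_def
proof (rule the_equality)
  let ?w = "if t < 0 then (- a, - b) else (a, b)"
  have "primitive_vec ?w"
    using w by (simp add: primitive_vec_uminus)
  moreover have "q - p = (\<bar>t\<bar> * of_int (fst ?w), \<bar>t\<bar> * of_int (snd ?w))"
    using pq by auto
  ultimately show "\<bar>t\<bar> \<ge> 0 \<and> (\<exists>w. primitive_vec w \<and> q - p = (\<bar>t\<bar> * of_int (fst w), \<bar>t\<bar> * of_int (snd w)))"
    using abs_ge_zero by blast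
next
  fix l assume "l \<ge> 0 \<and> (\<exists>w. primitive_vec w \<and> q - p = (l * of_int (fst w), l * of_int (snd w)))"
  then obtain a' b' where l: "l \<ge> 0" and w': "primitive_vec (a', b')"
    and lw: "q - p = (l * of_int a', l * of_int b')"
    by fastforce
  have eq: "l * of_int a' = t * of_int a" "l * of_int b' = t * of_int b"
    using lw pq by simp_all
  have nonzero: "(a, b) \<noteq> (0, 0)" "(a', b') \<noteq> (0, 0)"
    using w w' by (simp_all add: primitive_vec_def)
  show "l = \<bar>t\<bar>"
  proof (cases "l = 0 \<or> t = 0")
    case True
    then show ?thesis
      using eq nonzero by auto
  next
    case False
    have "t * l * of_int (a * b') = (t * of_int a) * (l * of_int b')"
      by (simp add: algebra_simps)
    also have "\<dots> = (l * of_int a') * (t * of_int b)"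
      using eq by simp
    also have "\<dots> = t * l * of_int (b * a')"
      by (simp add: algebra_simps)
    finally have "real_of_int (a * b') = real_of_int (b * a')"
      using False by simp
    then have "a * b' = b * a'"
      by (simp only: of_int_eq_iff)
    then have same: "\<bar>a'\<bar> = \<bar>a\<bar>" "\<bar>b'\<bar> = \<bar>b\<bar>"
      using primitive_vec_parallel[OF w w'] by simp_all
    have "l * \<bar>of_int a\<bar> = \<bar>t\<bar> * \<bar>of_int a\<bar>" "l * \<bar>of_int b\<bar> = \<bar>t\<bar> * \<bar>of_int b\<bar>"
      using eq same l by (metis abs_mult abs_of_nonneg of_int_abs)+
    then show ?thesis
      using nonzero(1) by auto
  qed
qed

lemma lattice_length_axis_diagonal:
  "lattice_length p q = \<bar>t\<bar>" if "q - p = (t, 0) \<or> q - p = (0, t) \<or> q - p = (t, t)"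
  using that lattice_length_eq_abs[of 1 0 q p t] lattice_length_eq_abs[of 0 1 q p t]
    lattice_length_eq_abs[of 1 1 q p t]
  by (auto simp: primitive_vec_def)

section \<open>Cells of the regular subdivision\<close>

text \<open>\<open>(g, d)\<close> encodes the non-vertical plane \<open>z = g \<bullet> p + d\<close> of \<open>lower_face\<close>.\<close>

definition lower_support :: "('a \<Rightarrow> ereal) \<Rightarrow> (nat \<Rightarrow> 'a::zero) \<Rightarrow> real \<times> real \<Rightarrow> real \<Rightarrow> bool" where
  "lower_support val c g d \<longleftrightarrow> (\<forall>k\<in>supp c. g \<bullet> Pt k + d \<le> hgt val c k)"

definition contact :: "('a \<Rightarrow> ereal) \<Rightarrow> (nat \<Rightarrow> 'a::zero) \<Rightarrow> real \<times> real \<Rightarrow> real \<Rightarrow> nat set" where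
  "contact val c g d = {k \<in> supp c. hgt val c k = g \<bullet> Pt k + d}"

lemma finite_supp: "finite (supp c)"
  unfolding supp_def by simp

lemma inner_lifted_normal:
  fixes g :: "real \<times> real" and p :: "(real \<times> real) \<times> real"
  shows "(g, -1) \<bullet> p = fst g * fst (fst p) + snd g * snd (fst p) - snd p"
  by (simp add: inner_prod_def)

lemma lower_face_eq_convex_hull_contact:
  assumes "lower_support val c g d"
  shows "{p \<in> convex hull lifted val c. snd p = fst g * fst (fst p) + snd g * snd (fst p) + d}
       = convex hull ((\<lambda>k. (Pt k, hgt val c k)) ` contact val c g d)"
proof -
  have "{p \<in> convex hull lifted val c. snd p = fst g * fst (fst p) + snd g * snd (fst p) + d}
      = convex hull lifted val c \<inter> {p. (g, -1) \<bullet> p = - d}"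
  proof -
    have "{p. (g, -1) \<bullet> p = - d} = {p. snd p = fst g * fst (fst p) + snd g * snd (fst p) + d}"
      unfolding inner_lifted_normal by (rule Collect_cong) linarith
    then show ?thesis by blast
  qed
  also have "\<dots> = convex hull {y \<in> lifted val c. (g, -1) \<bullet> y = - d}"
  proof (rule convex_hull_Int_supporting_hyperplane)
    show "finite (lifted val c)"
      unfolding lifted_def using finite_supp[of c] by simp
    show "\<forall>y\<in>lifted val c. (g, -1) \<bullet> y \<le> - d"
      using assms by (auto simp: lower_support_def lifted_def inner_Pair)
  qed
  also have "{y \<in> lifted val c. (g, -1) \<bullet> y = - d}
      = (\<lambda>k. (Pt k, hgt val c k)) ` {k \<in> supp c. (g, -1) \<bullet> (Pt k, hgt val c k) = - d}"
    unfolding lifted_def by blast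
  also have "{k \<in> supp c. (g, -1) \<bullet> (Pt k, hgt val c k) = - d} = contact val c g d"
    by (auto simp: contact_def inner_Pair)
  finally show ?thesis .
qed

lemma lifted_below_iff_lower_support:
  "(\<forall>p\<in>convex hull lifted val c. fst g * fst (fst p) + snd g * snd (fst p) + d \<le> snd p)
     \<longleftrightarrow> lower_support val c g d"
proof -
  have "convex hull lifted val c \<subseteq> {p. (g, -1) \<bullet> p \<le> - d} \<longleftrightarrow> lifted val c \<subseteq> {p. (g, -1) \<bullet> p \<le> - d}"
    by (rule subset_hull) (rule convex_halfspace_le)
  moreover have "lifted val c \<subseteq> {p. (g, -1) \<bullet> p \<le> - d} \<longleftrightarrow> lower_support val c g d"
    by (auto simp: lower_support_def lifted_def inner_Pair)
  moreover have "{p. (g, -1) \<bullet> p \<le> - d} = {p. fst g * fst (fst p) + snd g * snd (fst p) + d \<le> snd p}"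
    unfolding inner_lifted_normal by (rule Collect_cong) linarith
  ultimately show ?thesis
    by blast
qed

lemma mem_cells_iff:
  "\<sigma> \<in> cells val c \<longleftrightarrow> (\<exists>g d. lower_support val c g d \<and> \<sigma> = convex hull (Pt ` contact val c g d)
      \<and> aff_dim ((\<lambda>k. (Pt k, hgt val c k)) ` contact val c g d) = 2)"
    (is "_ \<longleftrightarrow> (\<exists>g d. ?cell g d)")
proof
  assume "\<sigma> \<in> cells val c"
  then obtain F a b d where F: "\<sigma> = fst ` F" "aff_dim F = 2"
    and below: "\<forall>p\<in>convex hull lifted val c. a * fst (fst p) + b * snd (fst p) + d \<le> snd p"
    and face: "F = {p \<in> convex hull lifted val c. snd p = a * fst (fst p) + b * snd (fst p) + d}"
    unfolding cells_def lower_face_def by blast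
  have support: "lower_support val c (a, b) d"
    using below lifted_below_iff_lower_support[of val c "(a, b)"] by simp
  have "F = convex hull ((\<lambda>k. (Pt k, hgt val c k)) ` contact val c (a, b) d)"
    using face lower_face_eq_convex_hull_contact[OF support] by simp
  then have "?cell (a, b) d"
    using support F by (simp add: convex_hull_linear_image[OF linear_fst] image_image aff_dim_convex_hull)
  then show "\<exists>g d. ?cell g d" by blast
next
  assume "\<exists>g d. ?cell g d"
  then obtain g d where support: "lower_support val c g d"
    and \<sigma>: "\<sigma> = convex hull (Pt ` contact val c g d)"
    and dim: "aff_dim ((\<lambda>k. (Pt k, hgt val c k)) ` contact val c g d) = 2"
    by blast
  define F where "F = convex hull ((\<lambda>k. (Pt k, hgt val c k)) ` contact val c g d)"
  have "lower_face val c F"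
    unfolding lower_face_def
  proof (intro conjI exI)
    show "F \<noteq> {}" using dim by (auto simp: F_def)
    show "\<forall>p\<in>convex hull lifted val c. fst g * fst (fst p) + snd g * snd (fst p) + d \<le> snd p"
      using support lifted_below_iff_lower_support by blast
    show "F = {p \<in> convex hull lifted val c. snd p = fst g * fst (fst p) + snd g * snd (fst p) + d}"
      unfolding F_def lower_face_eq_convex_hull_contact[OF support] ..
  qed
  moreover have "\<sigma> = fst ` F" "aff_dim F = 2"
    using \<sigma> dim by (simp_all add: F_def convex_hull_linear_image[OF linear_fst] image_image aff_dim_convex_hull)
  ultimately show "\<sigma> \<in> cells val c"
    unfolding cells_def by blast
qed

lemma lower_support_below_on_cell:
  assumes "lower_support val c g' d'" and "\<sigma> = convex hull (Pt ` contact val c g d)"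
    and "P \<in> \<sigma>"
  shows "g' \<bullet> P + d' \<le> g \<bullet> P + d"
proof -
  have "Pt ` contact val c g d \<subseteq> {P. (g' - g) \<bullet> P \<le> d - d'}"
    using assms(1) by (auto simp: lower_support_def contact_def inner_diff_left)
  then have "\<sigma> \<subseteq> {P. (g' - g) \<bullet> P \<le> d - d'}"
    unfolding assms(2) by (intro hull_minimal convex_halfspace_le)
  then show ?thesis
    using assms(3) by (auto simp: inner_diff_left)
qed

lemma contact_heights:
  assumes "lower_support val c g d" and "contact val c g d = C" and "k \<in> supp c"
  shows "k \<in> C \<Longrightarrow> hgt val c k = g \<bullet> Pt k + d"
    and "k \<notin> C \<Longrightarrow> g \<bullet> Pt k + d < hgt val c k"
  using assms by (auto simp: lower_support_def contact_def order_less_le)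

section \<open>Dual vertices\<close>

lemma trop_term_eq_inner: "trop_term val c k x = hgt val c k + Pt k \<bullet> x"
  by (simp add: trop_term_def inner_prod_def)

lemma dual_vertex_eq:
  assumes support: "lower_support val c g d"
    and on_face: "\<forall>k\<in>supp c. Pt k \<in> \<sigma> \<longrightarrow> k \<in> contact val c g d"
    and spanning: "affine hull (Pt ` {k \<in> supp c. Pt k \<in> \<sigma>}) = UNIV"
  shows "dual_vertex val c \<sigma> = - g"
  unfolding dual_vertex_def
proof (rule the_equality)
  have "{k \<in> supp c. Pt k \<in> \<sigma>} \<noteq> {}"
    using spanning affine_hull_eq_empty by force
  then obtain k0 where k0: "k0 \<in> supp c" "Pt k0 \<in> \<sigma>"
    by blast
  have "trop val c (- g) = d"
    unfolding trop_def
  proof (rule Min_eqI)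
    show "finite ((\<lambda>k. trop_term val c k (- g)) ` supp c)"
      using finite_supp by blast
    show "d \<le> y" if "y \<in> (\<lambda>k. trop_term val c k (- g)) ` supp c" for y
      using that support by (auto simp: lower_support_def trop_term_eq_inner inner_commute)
    show "d \<in> (\<lambda>k. trop_term val c k (- g)) ` supp c"
      using k0 on_face by (force simp: contact_def trop_term_eq_inner inner_commute)
  qed
  then show "\<forall>k\<in>supp c. Pt k \<in> \<sigma> \<longrightarrow> trop_term val c k (- g) = trop val c (- g)"
    using on_face by (auto simp: contact_def trop_term_eq_inner inner_commute)
next
  txt \<open>All terms of \<open>\<sigma>\<close> tie at \<open>x\<close>, so \<open>(g + x) \<bullet> p\<close> is constant on an affinely spanning set.\<close>
  fix x
  assume x: "\<forall>k\<in>supp c. Pt k \<in> \<sigma> \<longrightarrow> trop_term val c k x = trop val c x"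
  define m where "m = trop val c x - d"
  have "(g + x) \<bullet> Pt k = m" if "k \<in> supp c" "Pt k \<in> \<sigma>" for k
    using x on_face that
    by (fastforce simp: m_def contact_def trop_term_eq_inner inner_add_left inner_commute[of x])
  then have "Pt ` {k \<in> supp c. Pt k \<in> \<sigma>} \<subseteq> {p. (g + x) \<bullet> p = m}"
    by blast
  then have hyperplane: "UNIV \<subseteq> {p. (g + x) \<bullet> p = m}"
    unfolding spanning[symmetric] by (intro hull_minimal affine_hyperplane)
  have "(g + x) \<bullet> 0 = m" "(g + x) \<bullet> (g + x) = m"
    using hyperplane[THEN subsetD, OF UNIV_I] by blast+
  then have "g + x = 0"
    by simp
  then show "x = - g"
    by (simp add: add_eq_0_iff2)
qed

lemma vertices_mem_tri: "Pt i \<in> tri i j l" "Pt j \<in> tri i j l" "Pt l \<in> tri i j l"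
  unfolding tri_def by (simp_all add: hull_inc)

lemma triangle_cellE:
  assumes cell: "tri i j l \<in> cells val c"
    and lattice: "\<forall>k\<in>supp c. Pt k \<in> tri i j l \<longrightarrow> k \<in> {i, j, l}"
    and noncollinear: "\<not> collinear {Pt i, Pt j, Pt l}"
  obtains g d where "lower_support val c g d" "contact val c g d = {i, j, l}"
    "dual_vertex val c (tri i j l) = - g"
proof -
  obtain g d where support: "lower_support val c g d"
    and tri: "tri i j l = convex hull (Pt ` contact val c g d)"
    and dim: "aff_dim ((\<lambda>k. (Pt k, hgt val c k)) ` contact val c g d) = 2"
    using cell mem_cells_iff by blast
  have "contact val c g d \<subseteq> {i, j, l}"
  proof
    fix k assume "k \<in> contact val c g d"
    then have "k \<in> supp c" "Pt k \<in> tri i j l"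
      using tri hull_inc[of "Pt k" "Pt ` contact val c g d" convex] by (auto simp: contact_def)
    then show "k \<in> {i, j, l}"
      using lattice by blast
  qed
  then have contact: "contact val c g d = {i, j, l}"
    using dim by (rule eq_triple_if_aff_dim_image_eq_2)
  then have "{Pt i, Pt j, Pt l} \<subseteq> Pt ` {k \<in> supp c. Pt k \<in> tri i j l}"
    using vertices_mem_tri by (auto simp: contact_def)
  then have "affine hull {Pt i, Pt j, Pt l} \<subseteq> affine hull (Pt ` {k \<in> supp c. Pt k \<in> tri i j l})"
    by (rule hull_mono)
  then have "affine hull (Pt ` {k \<in> supp c. Pt k \<in> tri i j l}) = UNIV"
    unfolding affine_hull_eq_UNIV_if_not_collinear[OF noncollinear] by blast
  moreover have "\<forall>k\<in>supp c. Pt k \<in> tri i j l \<longrightarrow> k \<in> contact val c g d"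
    using lattice contact by blast
  ultimately have "dual_vertex val c (tri i j l) = - g"
    by (intro dual_vertex_eq[OF support])
  then show ?thesis
    using that support contact by blast
qed

section \<open>The support points\<close>

text \<open>The \<open>Suc 0\<close> variants are needed because the simplifier often normalises \<open>1 :: nat\<close>.\<close>

lemma Pt_values [simp]:
  "Pt 1 = (1, 2)" "Pt (Suc 0) = (1, 2)" "Pt 2 = (2, 1)" "Pt 3 = (2, 0)" "Pt 4 = (0, 2)"
  "Pt 5 = (1, 1)" "Pt 6 = (1, 0)" "Pt 7 = (0, 1)" "Pt 8 = (0, 0)"
  by (simp_all add: Pt_def)

lemma supp_subset: "supp c \<subseteq> {1, 2, 3, 4, 5, 6, 7, 8}"
  by (auto simp: supp_def)

lemma mem_tri_iff:
  "p \<in> tri i j l \<longleftrightarrow> (\<exists>u v w. 0 \<le> u \<and> 0 \<le> v \<and> 0 \<le> w \<and> u + v + w = 1 \<and>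
     p = u *\<^sub>R Pt i + v *\<^sub>R Pt j + w *\<^sub>R Pt l)"
  unfolding tri_def convex_hull_3 by blast

lemma lattice_points_of_triangles:
  "\<forall>k\<in>supp c. Pt k \<in> tri 1 2 5 \<longrightarrow> k \<in> {1, 2, 5}"
  "\<forall>k\<in>supp c. Pt k \<in> tri 2 3 5 \<longrightarrow> k \<in> {2, 3, 5}"
  "\<forall>k\<in>supp c. Pt k \<in> tri 3 5 6 \<longrightarrow> k \<in> {3, 5, 6}"
  "\<forall>k\<in>supp c. Pt k \<in> tri 5 6 7 \<longrightarrow> k \<in> {5, 6, 7}"
  "\<forall>k\<in>supp c. Pt k \<in> tri 4 5 7 \<longrightarrow> k \<in> {4, 5, 7}"
  "\<forall>k\<in>supp c. Pt k \<in> tri 1 4 5 \<longrightarrow> k \<in> {1, 4, 5}"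
  "\<forall>k\<in>supp c. Pt k \<in> tri 6 7 8 \<longrightarrow> k \<in> {6, 7, 8}"
  using supp_subset[of c] by (auto simp: mem_tri_iff prod_eq_iff dest!: subsetD)

lemma triangles_not_collinear:
  "\<not> collinear {Pt 1, Pt 2, Pt 5}" "\<not> collinear {Pt 2, Pt 3, Pt 5}" "\<not> collinear {Pt 3, Pt 5, Pt 6}"
  "\<not> collinear {Pt 5, Pt 6, Pt 7}" "\<not> collinear {Pt 4, Pt 5, Pt 7}" "\<not> collinear {Pt 1, Pt 4, Pt 5}"
  "\<not> collinear {Pt 6, Pt 7, Pt 8}"
  by (simp_all add: collinear_3 collinear_lemma prod_eq_iff)

section \<open>The truncated honeycomb\<close>

locale truncated_honeycomb_curve =
  fixes val :: "'a::field \<Rightarrow> ereal"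
    and c12 c34 c5 c67 c8 :: 'a
    and v12 v34 v5 v67 :: real and v8 :: ereal
  assumes valuation: "is_valuation val"
    and nonzero: "c12 \<noteq> 0" "c34 \<noteq> 0" "c5 \<noteq> 0" "c67 \<noteq> 0"
    and val_coefs: "val c12 = ereal v12" "val c34 = ereal v34" "val c5 = ereal v5"
      "val c67 = ereal v67" "val c8 = v8"
    and honeycomb: "truncated_honeycomb val (coefs c12 c34 c5 c67 c8)"
begin

abbreviation c where "c \<equiv> coefs c12 c34 c5 c67 c8"

text \<open>Meaningful only for \<open>c8 \<noteq> 0\<close>: otherwise \<open>v8 = \<infinity>\<close> and \<open>real_of_ereal \<infinity> = 0\<close>.\<close>

abbreviation r8 where "r8 \<equiv> real_of_ereal v8"

lemma supp_eq: "supp c = {1, 2, 3, 4, 5, 6, 7} \<union> (if c8 = 0 then {} else {8})"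
proof -
  have "{1..8} = {1, 2, 3, 4, 5, 6, 7, 8 :: nat}"
    by auto
  then show ?thesis
    using nonzero by (auto simp: supp_def coefs_def)
qed

lemma ball_supp_iff:
  "(\<forall>k\<in>supp c. P k) \<longleftrightarrow> P 1 \<and> P 2 \<and> P 3 \<and> P 4 \<and> P 5 \<and> P 6 \<and> P 7 \<and> (c8 \<noteq> 0 \<longrightarrow> P 8)"
  by (auto simp: supp_eq)

lemma mem_supp [simp]:
  "1 \<in> supp c" "Suc 0 \<in> supp c" "2 \<in> supp c" "3 \<in> supp c" "4 \<in> supp c" "5 \<in> supp c" "6 \<in> supp c"
  "7 \<in> supp c" "8 \<in> supp c \<longleftrightarrow> c8 \<noteq> 0"
  by (simp_all add: supp_eq)

lemma hgt_values [simp]: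
  "hgt val c 1 = v12" "hgt val c (Suc 0) = v12" "hgt val c 2 = v12" "hgt val c 3 = v34"
  "hgt val c 4 = v34" "hgt val c 5 = v5" "hgt val c 6 = v67" "hgt val c 7 = v67" "hgt val c 8 = r8"
  by (simp_all add: hgt_def coefs_def val_coefs)

lemma v8_eq_infinity_iff: "v8 = \<infinity> \<longleftrightarrow> c8 = 0"
  using valuation val_coefs(5) by (auto simp: is_valuation_def)

lemma v8_eq_ereal: "c8 \<noteq> 0 \<Longrightarrow> v8 = ereal r8"
  using valuation val_coefs(5) v8_eq_infinity_iff by (cases v8) (auto simp: is_valuation_def)

lemma hex_cells_mem_cells:
  "tri 1 2 5 \<in> cells val c" "tri 2 3 5 \<in> cells val c" "tri 3 5 6 \<in> cells val c"
  "tri 5 6 7 \<in> cells val c" "tri 4 5 7 \<in> cells val c" "tri 1 4 5 \<in> cells val c"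
  using honeycomb by (simp_all add: truncated_honeycomb_def hex_cells_def)

lemma triangle_125: "v5 < v34" "dual_vertex val c (tri 1 2 5) = (v5 - v12, v5 - v12)"
proof -
  obtain a b d where "lower_support val c (a, b) d" "contact val c (a, b) d = {1, 2, 5}"
    and dual: "dual_vertex val c (tri 1 2 5) = - (a, b)"
    using triangle_cellE[OF hex_cells_mem_cells(1) lattice_points_of_triangles(1)
        triangles_not_collinear(1)] by (metis surj_pair)
  note heights = contact_heights[OF this(1,2)]
  have "a + 2 * b + d = v12" "2 * a + b + d = v12" "a + b + d = v5" "2 * a + d < v34"
    using heights[of 1] heights[of 2] heights[of 5] heights[of 3] by simp_all
  then show "v5 < v34" "dual_vertex val c (tri 1 2 5) = (v5 - v12, v5 - v12)"
    unfolding dual by auto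
qed

lemma triangle_235: "v34 + v5 < v12 + v67" "dual_vertex val c (tri 2 3 5) = (v5 - v12, v34 - v12)"
proof -
  obtain a b d where "lower_support val c (a, b) d" "contact val c (a, b) d = {2, 3, 5}"
    and dual: "dual_vertex val c (tri 2 3 5) = - (a, b)"
    using triangle_cellE[OF hex_cells_mem_cells(2) lattice_points_of_triangles(2)
        triangles_not_collinear(2)] by (metis surj_pair)
  note heights = contact_heights[OF this(1,2)]
  have "2 * a + b + d = v12" "2 * a + d = v34" "a + b + d = v5" "a + d < v67"
    using heights[of 2] heights[of 3] heights[of 5] heights[of 6] by simp_all
  then show "v34 + v5 < v12 + v67" "dual_vertex val c (tri 2 3 5) = (v5 - v12, v34 - v12)"
    unfolding dual by auto
qed

lemma triangle_356: "dual_vertex val c (tri 3 5 6) = (v67 - v34, v67 - v5)"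
proof -
  obtain a b d where "lower_support val c (a, b) d" "contact val c (a, b) d = {3, 5, 6}"
    and dual: "dual_vertex val c (tri 3 5 6) = - (a, b)"
    using triangle_cellE[OF hex_cells_mem_cells(3) lattice_points_of_triangles(3)
        triangles_not_collinear(3)] by (metis surj_pair)
  note heights = contact_heights[OF this(1,2)]
  have "2 * a + d = v34" "a + b + d = v5" "a + d = v67"
    using heights[of 3] heights[of 5] heights[of 6] by simp_all
  then show ?thesis
    unfolding dual by auto
qed

lemma triangle_567:
  "lower_support val c (v5 - v67, v5 - v67) (2 * v67 - v5)"
  "contact val c (v5 - v67, v5 - v67) (2 * v67 - v5) = {5, 6, 7}"
  "dual_vertex val c (tri 5 6 7) = (v67 - v5, v67 - v5)"
  "c8 \<noteq> 0 \<Longrightarrow> 2 * v67 - v5 < r8"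
proof -
  obtain a b d where support: "lower_support val c (a, b) d"
    and contact: "contact val c (a, b) d = {5, 6, 7}"
    and dual: "dual_vertex val c (tri 5 6 7) = - (a, b)"
    using triangle_cellE[OF hex_cells_mem_cells(4) lattice_points_of_triangles(4)
        triangles_not_collinear(4)] by (metis surj_pair)
  note heights = contact_heights[OF support contact]
  have "a + b + d = v5" "a + d = v67" "b + d = v67" "c8 \<noteq> 0 \<Longrightarrow> d < r8"
    using heights[of 5] heights[of 6] heights[of 7] heights[of 8] by simp_all
  then have "a = v5 - v67" "b = v5 - v67" "d = 2 * v67 - v5" "c8 \<noteq> 0 \<Longrightarrow> d < r8"
    by linarith+
  then show "lower_support val c (v5 - v67, v5 - v67) (2 * v67 - v5)"
    "contact val c (v5 - v67, v5 - v67) (2 * v67 - v5) = {5, 6, 7}"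
    "dual_vertex val c (tri 5 6 7) = (v67 - v5, v67 - v5)"
    "c8 \<noteq> 0 \<Longrightarrow> 2 * v67 - v5 < r8"
    using support contact dual by auto
qed

lemma triangle_457: "dual_vertex val c (tri 4 5 7) = (v67 - v5, v67 - v34)"
proof -
  obtain a b d where "lower_support val c (a, b) d" "contact val c (a, b) d = {4, 5, 7}"
    and dual: "dual_vertex val c (tri 4 5 7) = - (a, b)"
    using triangle_cellE[OF hex_cells_mem_cells(5) lattice_points_of_triangles(5)
        triangles_not_collinear(5)] by (metis surj_pair)
  note heights = contact_heights[OF this(1,2)]
  have "2 * b + d = v34" "a + b + d = v5" "b + d = v67"
    using heights[of 4] heights[of 5] heights[of 7] by simp_all
  then show ?thesis
    unfolding dual by auto
qed

lemma triangle_145: "dual_vertex val c (tri 1 4 5) = (v34 - v12, v5 - v12)"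
proof -
  obtain a b d where "lower_support val c (a, b) d" "contact val c (a, b) d = {1, 4, 5}"
    and dual: "dual_vertex val c (tri 1 4 5) = - (a, b)"
    using triangle_cellE[OF hex_cells_mem_cells(6) lattice_points_of_triangles(6)
        triangles_not_collinear(6)] by (metis surj_pair)
  note heights = contact_heights[OF this(1,2)]
  have "a + 2 * b + d = v12" "2 * b + d = v34" "a + b + d = v5"
    using heights[of 1] heights[of 4] heights[of 5] by simp_all
  then show ?thesis
    unfolding dual by auto
qed

lemma hex_side_lengths_eq:
  "hex_side_lengths val c = [\<bar>v34 - v5\<bar>, \<bar>v12 + v67 - v34 - v5\<bar>, \<bar>v34 - v5\<bar>,
     \<bar>v5 - v34\<bar>, \<bar>v34 + v5 - v12 - v67\<bar>, \<bar>v5 - v34\<bar>]"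
  unfolding hex_side_lengths_def hex_cells_def
  by (simp add: upt_rec triangle_125(2)[unfolded One_nat_def] triangle_235(2) triangle_356
      triangle_567(3) triangle_457 triangle_145[unfolded One_nat_def] lattice_length_axis_diagonal)

lemma quasi_symmetric_iff: "quasi_symmetric val c \<longleftrightarrow> 2 * v34 = v12 + v67"
  using triangle_125(1) triangle_235(1)
  by (auto simp: quasi_symmetric_def hex_side_lengths_eq)

lemma hex_side_lengths_if_quasi_symmetric:
  "quasi_symmetric val c \<Longrightarrow> \<forall>l\<in>set (hex_side_lengths val c). l = \<bar>v34 - v5\<bar>"
  using triangle_125(1) triangle_235(1)
  by (auto simp: quasi_symmetric_iff hex_side_lengths_eq)

lemma v8_lower_bound: "ereal (- v5 + 2 * v67) < v8"
proof (cases "c8 = 0")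
  case True
  then show ?thesis
    using v8_eq_infinity_iff by simp
next
  case False
  then have "ereal (- v5 + 2 * v67) < ereal r8"
    using triangle_567(4) by simp
  then show ?thesis
    using v8_eq_ereal[OF False] by metis
qed

lemma tail_plane:
  assumes "c8 \<noteq> 0"
  shows "lower_support val c (v67 - r8, v67 - r8) r8"
    and "contact val c (v67 - r8, v67 - r8) r8 = {6, 7, 8}"
proof -
  let ?g = "(v67 - r8, v67 - r8)"
  have "3 * v67 - 2 * r8 < v12" "2 * v67 - r8 < v34" "2 * v67 - r8 < v5"
    using triangle_125(1) triangle_235(1) triangle_567(4)[OF assms] by linarith+
  then have below: "?g \<bullet> Pt k + r8 < hgt val c k" if "k \<in> {1, 2, 3, 4, 5}" for k
    using that by (auto simp: algebra_simps)
  then show "lower_support val c ?g r8"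
    unfolding lower_support_def ball_supp_iff
    using below[of 1] below[of 2] below[of 3] below[of 4] below[of 5] by simp
  have "contact val c ?g r8 \<subseteq> {6, 7, 8}"
  proof
    fix k assume "k \<in> contact val c ?g r8"
    then have "k \<in> supp c" and on: "hgt val c k = ?g \<bullet> Pt k + r8"
      by (simp_all add: contact_def)
    then have "k \<in> {1, 2, 3, 4, 5, 6, 7, 8}"
      using supp_subset by blast
    then show "k \<in> {6, 7, 8}"
      using below[of k] on by auto
  qed
  moreover have "{6, 7, 8} \<subseteq> contact val c ?g r8"
    using assms by (simp add: contact_def)
  ultimately show "contact val c ?g r8 = {6, 7, 8}"
    by (rule subset_antisym)
qed

lemma tail_cell:
  assumes "c8 \<noteq> 0"
  shows "tri 6 7 8 \<in> cells val c"
  unfolding mem_cells_iff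
proof (intro exI conjI)
  note contact = tail_plane(2)[OF assms]
  show "lower_support val c (v67 - r8, v67 - r8) r8"
    using tail_plane(1)[OF assms] .
  show "tri 6 7 8 = convex hull (Pt ` contact val c (v67 - r8, v67 - r8) r8)"
    by (simp add: contact tri_def)
  have "\<not> collinear {((1, 0), v67), ((0, 1), v67), ((0, 0), r8) :: (real \<times> real) \<times> real}"
    by (simp add: collinear_3 collinear_lemma prod_eq_iff)
  from aff_dim_eq_2_if_not_collinear[OF this]
  show "aff_dim ((\<lambda>k. (Pt k, hgt val c k)) ` contact val c (v67 - r8, v67 - r8) r8) = 2"
    by (simp add: contact)
qed

lemma tail_cell_unique:
  assumes "c8 \<noteq> 0" and "\<sigma> \<in> cells val c" and "Pt 6 \<in> \<sigma>" "Pt 7 \<in> \<sigma>" and "\<sigma> \<noteq> tri 5 6 7"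
  shows "\<sigma> = tri 6 7 8"
proof -
  obtain a b d where support: "lower_support val c (a, b) d"
    and \<sigma>: "\<sigma> = convex hull (Pt ` contact val c (a, b) d)"
    and dim: "aff_dim ((\<lambda>k. (Pt k, hgt val c k)) ` contact val c (a, b) d) = 2"
  proof -
    obtain g d where "lower_support val c g d" "\<sigma> = convex hull (Pt ` contact val c g d)"
      "aff_dim ((\<lambda>k. (Pt k, hgt val c k)) ` contact val c g d) = 2"
      using assms(2) mem_cells_iff by blast
    then show ?thesis
      using that[of "fst g" "snd g" d] by simp
  qed
  txt \<open>The plane of \<open>\<sigma>\<close> lies above that of \<open>P\<^sub>5P\<^sub>6P\<^sub>7\<close> on \<open>\<sigma>\<close>, so it passes through the
    lifts of \<open>P\<^sub>6\<close>, \<open>P\<^sub>7\<close> and strictly below that of \<open>P\<^sub>5\<close>; this leaves only \<open>P\<^sub>8\<close>.\<close>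
  note above_567 = lower_support_below_on_cell[OF triangle_567(1) \<sigma>]
  have "v67 \<le> a + d" "v67 \<le> b + d"
    using above_567[OF assms(3)] above_567[OF assms(4)] by simp_all
  moreover have "a + d \<le> v67" "b + d \<le> v67" and le5: "a + b + d \<le> v5"
    using support by (simp_all add: lower_support_def ball_supp_iff)
  ultimately have on67: "a + d = v67" "b + d = v67"
    by linarith+
  have "a + b + d \<noteq> v5"
  proof
    assume "a + b + d = v5"
    with on67 have "a = v5 - v67" "b = v5 - v67" "d = 2 * v67 - v5"
      by linarith+
    then have "\<sigma> = tri 5 6 7"
      using \<sigma> triangle_567(2) by (simp add: tri_def)
    with assms(5) show False ..
  qed
  with le5 on67 triangle_125(1) triangle_235(1)
  have "a + 2 * b + d < v12" "2 * a + b + d < v12" "2 * a + d < v34" "2 * b + d < v34" "a + b + d < v5"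
    by linarith+
  then have "k \<notin> contact val c (a, b) d" if "k \<in> {1, 2, 3, 4, 5}" for k
    using that by (auto simp: contact_def)
  then have "contact val c (a, b) d \<subseteq> {6, 7, 8}"
    using supp_subset[of c] by (auto simp: contact_def)
  then have "contact val c (a, b) d = {6, 7, 8}"
    using dim by (rule eq_triple_if_aff_dim_image_eq_2)
  then show ?thesis
    using \<sigma> by (simp add: tri_def)
qed

lemma dual_vertex_678:
  assumes "c8 \<noteq> 0"
  shows "dual_vertex val c (tri 6 7 8) = (r8 - v67, r8 - v67)"
proof -
  obtain a b d where "lower_support val c (a, b) d" "contact val c (a, b) d = {6, 7, 8}"
    and dual: "dual_vertex val c (tri 6 7 8) = - (a, b)"
    using triangle_cellE[OF tail_cell[OF assms] lattice_points_of_triangles(7)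
        triangles_not_collinear(7)] by (metis surj_pair)
  note heights = contact_heights[OF this(1,2)]
  have "a + d = v67" "b + d = v67" "d = r8"
    using heights[of 6] heights[of 7] heights[of 8] assms by simp_all
  then show ?thesis
    unfolding dual by auto
qed

lemma tail_exists:
  assumes "c8 \<noteq> 0"
  shows "\<exists>\<sigma>\<in>cells val c. Pt 6 \<in> \<sigma> \<and> Pt 7 \<in> \<sigma> \<and> \<sigma> \<noteq> tri 5 6 7"
proof (intro bexI conjI)
  have "Pt 5 \<notin> tri 6 7 8"
    using lattice_points_of_triangles(7)[of c, rule_format, of 5] by auto
  then show "tri 6 7 8 \<noteq> tri 5 6 7"
    using vertices_mem_tri(1)[of 5 6 7] by metis
qed (rule vertices_mem_tri tail_cell[OF assms])+

lemma tail_length: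
  assumes "c8 \<noteq> 0" and "\<sigma> \<in> cells val c" and "Pt 6 \<in> \<sigma>" "Pt 7 \<in> \<sigma>" and "\<sigma> \<noteq> tri 5 6 7"
  shows "lattice_length (dual_vertex val c (tri 5 6 7)) (dual_vertex val c \<sigma>) = \<bar>v5 - 2 * v67 + r8\<bar>"
proof -
  have "dual_vertex val c \<sigma> - dual_vertex val c (tri 5 6 7) = (v5 - 2 * v67 + r8, v5 - 2 * v67 + r8)"
    using tail_cell_unique[OF assms] dual_vertex_678[OF assms(1)] triangle_567(3) by simp
  then show ?thesis
    by (rule lattice_length_axis_diagonal[OF disjI2[OF disjI2]])
qed

lemma outer_edges_subset_frontier_iff:
  "(\<forall>e\<in>set outer_edges. e \<subseteq> frontier (newton_polygon c)) \<longleftrightarrow> c8 = 0"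
proof
  assume edges: "\<forall>e\<in>set outer_edges. e \<subseteq> frontier (newton_polygon c)"
  show "c8 = 0"
  proof (rule ccontr)
    assume "c8 \<noteq> 0"
    have "Pt k \<in> Pt ` supp c" if "k \<in> supp c" for k
      using that by (rule imageI)
    then have "{Pt 8, Pt 6, Pt 7, Pt 5} \<subseteq> Pt ` supp c"
      using \<open>c8 \<noteq> 0\<close> by (simp del: Pt_values)
    then have "(1/2, 1/2) \<in> interior (newton_polygon c)"
      unfolding newton_polygon_def by (intro unit_square_center_mem_interior_convex_hull) simp
    moreover have "(1/2, 1/2) \<in> closed_segment (Pt 6) (Pt 7)"
      using midpoint_in_closed_segment[of "Pt 6" "Pt 7"] by (simp add: midpoint_def)
    moreover have "closed_segment (Pt 6) (Pt 7) \<subseteq> frontier (newton_polygon c)"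
      using edges by (simp add: outer_edges_def)
    ultimately show False
      by (auto simp: frontier_def)
  qed
next
  assume "c8 = 0"
  then have S: "newton_polygon c = convex hull {(1, 2), (2, 1), (2, 0), (0, 2), (1, 1), (1, 0), (0, 1)}"
    unfolding newton_polygon_def by (subst supp_eq) simp
  let ?S = "{(1, 2), (2, 1), (2, 0), (0, 2), (1, 1), (1, 0), (0, 1)} :: (real \<times> real) set"
  have "closed_segment (1, 2) (2, 1) \<subseteq> frontier (convex hull ?S)"
    by (rule closed_segment_subset_frontier_convex_hull[where n="(1, 1)" and m=3]) (auto simp: zero_prod_def)
  moreover have "closed_segment (2, 1) (2, 0) \<subseteq> frontier (convex hull ?S)"
    by (rule closed_segment_subset_frontier_convex_hull[where n="(1, 0)" and m=2]) (auto simp: zero_prod_def)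
  moreover have "closed_segment (2, 0) (1, 0) \<subseteq> frontier (convex hull ?S)"
    by (rule closed_segment_subset_frontier_convex_hull[where n="(0, -1)" and m=0]) (auto simp: zero_prod_def)
  moreover have "closed_segment (1, 0) (0, 1) \<subseteq> frontier (convex hull ?S)"
    by (rule closed_segment_subset_frontier_convex_hull[where n="(-1, -1)" and m="-1"]) (auto simp: zero_prod_def)
  moreover have "closed_segment (0, 1) (0, 2) \<subseteq> frontier (convex hull ?S)"
    by (rule closed_segment_subset_frontier_convex_hull[where n="(-1, 0)" and m=0]) (auto simp: zero_prod_def)
  moreover have "closed_segment (0, 2) (1, 2) \<subseteq> frontier (convex hull ?S)"
    by (rule closed_segment_subset_frontier_convex_hull[where n="(0, 1)" and m=2]) (auto simp: zero_prod_def)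
  ultimately show "\<forall>e\<in>set outer_edges. e \<subseteq> frontier (newton_polygon c)"
    unfolding S outer_edges_def by simp
qed

end

theorem proposition5p3:
  fixes val :: "'a::field \<Rightarrow> ereal"
    and c12 c34 c5 c67 c8 :: 'a
    and v12 v34 v5 v67 :: real and v8 :: ereal
  assumes "is_valuation val"
    and "c12 \<noteq> 0" and "c34 \<noteq> 0" and "c5 \<noteq> 0" and "c67 \<noteq> 0"
    and "val c12 = ereal v12" and "val c34 = ereal v34" and "val c5 = ereal v5"
    and "val c67 = ereal v67" and "val c8 = v8"
    and "truncated_honeycomb val (coefs c12 c34 c5 c67 c8)"
  shows "(quasi_symmetric val (coefs c12 c34 c5 c67 c8) \<longleftrightarrow>
            2 * v34 = v12 + v67 \<and> ereal (- v5 + 2 * v67) < v8)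
       \<and> (quasi_symmetric val (coefs c12 c34 c5 c67 c8) \<longrightarrow>
            (\<forall>l \<in> set (hex_side_lengths val (coefs c12 c34 c5 c67 c8)). l = \<bar>v34 - v5\<bar>)
          \<and> (c8 \<noteq> 0 \<longrightarrow>
              (\<exists>\<sigma> \<in> cells val (coefs c12 c34 c5 c67 c8).
                  Pt 6 \<in> \<sigma> \<and> Pt 7 \<in> \<sigma> \<and> \<sigma> \<noteq> tri 5 6 7)
            \<and> (\<forall>\<sigma> \<in> cells val (coefs c12 c34 c5 c67 c8).
                  Pt 6 \<in> \<sigma> \<and> Pt 7 \<in> \<sigma> \<and> \<sigma> \<noteq> tri 5 6 7 \<longrightarrow>
                  lattice_length (dual_vertex val (coefs c12 c34 c5 c67 c8) (tri 5 6 7))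
                                 (dual_vertex val (coefs c12 c34 c5 c67 c8) \<sigma>)
                    = \<bar>v5 - 2 * v67 + real_of_ereal v8\<bar>)))
       \<and> (symmetric_curve val (coefs c12 c34 c5 c67 c8) \<longleftrightarrow>
            2 * v34 = v12 + v67 \<and> v8 = \<infinity>)"
proof -
  interpret truncated_honeycomb_curve val c12 c34 c5 c67 c8 v12 v34 v5 v67 v8
    using assms by unfold_locales
  have symmetric: "symmetric_curve val c \<longleftrightarrow> 2 * v34 = v12 + v67 \<and> v8 = \<infinity>"
    by (simp add: symmetric_curve_def quasi_symmetric_iff outer_edges_subset_frontier_iff
        v8_eq_infinity_iff)
  show ?thesis
    unfolding symmetric
    using quasi_symmetric_iff v8_lower_bound hex_side_lengths_if_quasi_symmetric tail_exists tail_length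
    by blast
qed

end
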